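(* Let $r>1$, $K=70$. There exists $n_0$, depending on $r$, such that the following holds. Let $k,\ell,m$ be positive integers, let $n=\ell(k+m)+1$, and let $\kappa=\max\{3k,Kr^4\log n\}$. Suppose $\ell\ge Kr^4\kappa\log n$, $m\ge 6r^2\kappa$ and $n\ge n_0$. Fix $x_0\in R_1\cup\dots\cup R_\ell$ in the $(k,\ell,m)$-superstar and run the Moran process with fitness $r$ on the superstar with initial mutant $x_0$. Then the extinction probability is at least $1/(7Kr^4\kappa)$.
   Context: Logarithms are natural. Moran process: given a directed graph $G$ and fitness $r$, one vertex $x_0$ is a mutant, the rest non-mutants. At each step a vertex $v$ is chosen with probability proportional to fitness (mutants $r$, non-mutants $1$), an out-neighbour $w$ of $v$ is chosen uniformly at random and the state of $v$ is copied to $w$. Extinction: eventually no vertex is a mutant. The $(k,\ell,m)$-superstar has vertex set the disjoint union of reservoirs $R_1,\dots,R_\ell$ of size $m$, vertices $v_{i,j}$ ($i\in[\ell]$, $j\in[k]$), and a centre $v^*$; its edges are, for each $i\in[\ell]$: from $v^*$ to every vertex of $R_i$, from every vertex of $R_i$ to $v_{i,1}$, from $v_{i,j}$ to $v_{i,j+1}$ for $j\in[k-1]$, and from $v_{i,k}$ to $v^*$. *)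

theory Defs
  imports "HOL-Probability.Probability"
begin

text \<open>A directed graph is given by a finite vertex set V and an out-neighbourhood map out.
A state of the Moran process is the set S of mutant vertices.\<close>

definition fitness :: "real \<Rightarrow> 'v set \<Rightarrow> 'v \<Rightarrow> real" where
  "fitness r S v = (if v \<in> S then r else 1)"

definition total_fitness :: "'v set \<Rightarrow> real \<Rightarrow> 'v set \<Rightarrow> real" where
  "total_fitness V r S = (\<Sum>v\<in>V. fitness r S v)"

definition moran_step :: "'v set \<Rightarrow> ('v \<Rightarrow> 'v set) \<Rightarrow> real \<Rightarrow> 'v set \<Rightarrow> 'v set pmf" where
  "moran_step V out r S =
     bind_pmf (embed_pmf (\<lambda>v. if v \<in> V then fitness r S v / total_fitness V r S else 0))
       (\<lambda>v. map_pmf (\<lambda>w. if v \<in> S then insert w S else S - {w}) (pmf_of_set (out v)))"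

definition moran_dist :: "'v set \<Rightarrow> ('v \<Rightarrow> 'v set) \<Rightarrow> real \<Rightarrow> 'v \<Rightarrow> nat \<Rightarrow> 'v set pmf" where
  "moran_dist V out r x0 t = ((\<lambda>p. bind_pmf p (moran_step V out r)) ^^ t) (return_pmf {x0})"

text \<open>Extinction probability: probability that eventually no vertex is a mutant.  Since the
empty state is absorbing, this is the supremum over t of the probability of having no mutant
at time t.\<close>

definition extinction_prob :: "'v set \<Rightarrow> ('v \<Rightarrow> 'v set) \<Rightarrow> real \<Rightarrow> 'v \<Rightarrow> real" where
  "extinction_prob V out r x0 = (SUP t. pmf (moran_dist V out r x0 t) {})"

text \<open>Res i a: the a-th vertex of reservoir R_i (1 \<le> a \<le> m); Path i j: v_{i,j}; Centre: v*.\<close>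

datatype ss_vertex = Res nat nat | Path nat nat | Centre

definition reservoirs :: "nat \<Rightarrow> nat \<Rightarrow> ss_vertex set" where
  "reservoirs l m = {Res i a | i a. i \<in> {1..l} \<and> a \<in> {1..m}}"

definition superstar_V :: "nat \<Rightarrow> nat \<Rightarrow> nat \<Rightarrow> ss_vertex set" where
  "superstar_V k l m = reservoirs l m \<union> {Path i j | i j. i \<in> {1..l} \<and> j \<in> {1..k}} \<union> {Centre}"

fun superstar_out :: "nat \<Rightarrow> nat \<Rightarrow> nat \<Rightarrow> ss_vertex \<Rightarrow> ss_vertex set" where
  "superstar_out k l m Centre = reservoirs l m"
| "superstar_out k l m (Res i a) = {Path i 1}"
| "superstar_out k l m (Path i j) = (if j < k then {Path i (j + 1)} else {Centre})"

end

theory Submission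
  imports Defs
begin

text \<open>We construct a potential \<open>\<phi>\<close> on mutant sets with \<open>0 \<le> \<phi> \<le> 1\<close> and
\<open>\<phi> {x\<^sub>0} = p = 1/(7 \<cdot> 70 r\<^sup>4 \<kappa>)\<close> whose expectation never decreases along the Moran chain and
strictly increases from every nonempty state of positive potential. A bounded submartingale
of this kind can only spend a vanishing proportion of probability in nonempty states of
positive potential, so the extinction probability is at least \<open>\<phi> {x\<^sub>0}\<close>.

The potential vanishes unless all mutants lie on the track
\<open>x\<^sub>0 \<rightarrow> v\<^sub>i\<^sub>,\<^sub>1 \<rightarrow> \<dots> \<rightarrow> v\<^sub>i\<^sub>,\<^sub>k \<rightarrow> v\<^sup>*\<close> of the branch of \<open>x\<^sub>0\<close>. On the track it is \<open>1\<close> minus a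
penalty, or \<open>p\<close> minus twice \<open>p\<close> times the penalty while \<open>x\<^sub>0\<close> is still a mutant; the penalty charges
a mutant centre and the mutants on the path according to how long they need to leave it. The
drift is estimated vertex by vertex: non-mutant reservoir vertices of the branch and the
ends of the other paths reset the path and the centre often enough to outweigh every
possible loss, because \<open>\<ell>\<close> and \<open>m\<close> are large compared with \<open>r\<^sup>4 \<kappa>\<close>.\<close>

definition moran_update :: "'v set \<Rightarrow> 'v \<Rightarrow> 'v \<Rightarrow> 'v set" where
  "moran_update S v w = (if v \<in> S then insert w S else S - {w})"

definition step_expectation ::
  "'v set \<Rightarrow> ('v \<Rightarrow> 'v set) \<Rightarrow> real \<Rightarrow> 'v set \<Rightarrow> ('v set \<Rightarrow> real) \<Rightarrow> real" where
  "step_expectation V out r S g =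
     (\<Sum>v\<in>V. fitness r S v / total_fitness V r S *
        ((\<Sum>w\<in>out v. g (moran_update S v w)) / card (out v)))"

definition vertex_drift :: "('v \<Rightarrow> 'v set) \<Rightarrow> real \<Rightarrow> ('v set \<Rightarrow> real) \<Rightarrow> 'v set \<Rightarrow> 'v \<Rightarrow> real" where
  "vertex_drift out r g S v =
     fitness r S v * ((\<Sum>w\<in>out v. g (moran_update S v w)) / card (out v) - g S)"

lemma vertex_drift_unchanged:
  assumes "out v \<noteq> {}" "finite (out v)" "\<And>w. w \<in> out v \<Longrightarrow> moran_update S v w = S"
  shows "vertex_drift out r g S v = 0"
  using assms by (simp add: vertex_drift_def)

lemma vertex_drift_single_out:
  "out v = {u} \<Longrightarrow> vertex_drift out r g S v = fitness r S v * (g (moran_update S v u) - g S)"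
  by (simp add: vertex_drift_def)

lemma bounded_increments_small_term:
  fixes \<psi> \<pi> :: "nat \<Rightarrow> real"
  assumes c: "c > 0" and bounded: "\<And>t. \<psi> t \<le> B" and nonneg: "\<And>t. \<pi> t \<ge> 0"
    and increment: "\<And>t. \<psi> t + c * \<pi> t \<le> \<psi> (Suc t)" and e: "e > 0"
  obtains t where "\<pi> t \<le> e" "\<psi> 0 \<le> \<psi> t"
proof -
  have telescope: "\<psi> 0 + c * (\<Sum>s<t. \<pi> s) \<le> \<psi> t" for t
  proof (induction t)
    case (Suc t)
    then show ?case using increment[of t] by (simp add: algebra_simps)
  qed simp
  have "\<exists>t. \<pi> t \<le> e"
  proof (rule ccontr)
    assume "\<nexists>t. \<pi> t \<le> e"
    then have large: "e < \<pi> t" for t by (meson not_le)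
    obtain T :: nat where T: "B - \<psi> 0 < real T * (c * e)"
      using ex_less_of_nat_mult[of "c * e"] c e by auto
    have "real T * e \<le> (\<Sum>s<T. \<pi> s)"
      using sum_mono[of "{..<T}" "\<lambda>_. e" \<pi>] large by (simp add: less_imp_le)
    then have "real T * (c * e) \<le> c * (\<Sum>s<T. \<pi> s)"
      using c by (simp add: mult.left_commute)
    then show False using T telescope[of T] bounded[of T] by linarith
  qed
  then obtain t where small: "\<pi> t \<le> e" by blast
  have "0 \<le> c * (\<Sum>s<t. \<pi> s)" using c nonneg by (simp add: sum_nonneg)
  then have "\<psi> 0 \<le> \<psi> t" using telescope[of t] by linarith
  with small show thesis by (rule that)
qed

lemma finite_uniform_lower_bound:
  fixes f :: "'a \<Rightarrow> real"
  assumes "finite N" "\<And>x. x \<in> N \<Longrightarrow> f x > 0"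
  shows "\<exists>c>0. \<forall>x\<in>N. c \<le> f x"
proof (intro exI conjI ballI)
  show "Min (insert 1 (f ` N)) > 0" using assms by (auto simp: Min_gr_iff)
  show "Min (insert 1 (f ` N)) \<le> f x" if "x \<in> N" for x using assms(1) that by (intro Min_le) auto
qed

locale moran_graph =
  fixes V :: "'v set" and out :: "'v \<Rightarrow> 'v set" and r :: real
  assumes finite_V: "finite V" and V_nonempty: "V \<noteq> {}"
    and out_nonempty: "\<And>v. v \<in> V \<Longrightarrow> out v \<noteq> {}"
    and finite_out: "\<And>v. v \<in> V \<Longrightarrow> finite (out v)"
    and out_subset: "\<And>v. v \<in> V \<Longrightarrow> out v \<subseteq> V"
    and r_pos: "r > 0"
begin

lemma fitness_pos: "fitness r S v > 0"
  using r_pos by (simp add: fitness_def)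

lemma total_fitness_pos: "total_fitness V r S > 0"
  unfolding total_fitness_def using finite_V V_nonempty by (intro sum_pos) (simp_all add: fitness_pos)

definition choice_weight :: "'v set \<Rightarrow> 'v \<Rightarrow> real" where
  "choice_weight S v = (if v \<in> V then fitness r S v / total_fitness V r S else 0)"

lemma choice_weight_nonneg: "choice_weight S v \<ge> 0"
  using fitness_pos[of S v] total_fitness_pos[of S] by (simp add: choice_weight_def)

lemma sum_choice_weight: "(\<Sum>v\<in>V. choice_weight S v) = 1"
proof -
  have "(\<Sum>v\<in>V. choice_weight S v) = (\<Sum>v\<in>V. fitness r S v) / total_fitness V r S"
    by (simp add: choice_weight_def sum_divide_distrib)
  then show ?thesis using total_fitness_pos[of S] by (simp add: total_fitness_def)
qed

lemma nn_integral_choice_weight: "(\<integral>\<^sup>+v. ennreal (choice_weight S v) \<partial>count_space UNIV) = 1"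
proof -
  have "(\<integral>\<^sup>+v. ennreal (choice_weight S v) \<partial>count_space UNIV) = (\<Sum>v\<in>V. ennreal (choice_weight S v))"
    by (rule nn_integral_count_space') (auto simp: finite_V choice_weight_def)
  also have "\<dots> = 1"
    using choice_weight_nonneg sum_choice_weight by (simp add: sum_ennreal)
  finally show ?thesis .
qed

lemma pmf_choice_weight: "pmf (embed_pmf (choice_weight S)) v = choice_weight S v"
  by (rule pmf_embed_pmf[OF choice_weight_nonneg nn_integral_choice_weight])

lemma set_pmf_choice_weight: "set_pmf (embed_pmf (choice_weight S)) \<subseteq> V"
proof
  fix v assume "v \<in> set_pmf (embed_pmf (choice_weight S))"
  then have "choice_weight S v \<noteq> 0"
    using set_embed_pmf[OF choice_weight_nonneg nn_integral_choice_weight] by blast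
  then show "v \<in> V" by (auto simp: choice_weight_def split: if_splits)
qed

lemma moran_step_eq:
  "moran_step V out r S =
     bind_pmf (embed_pmf (choice_weight S)) (\<lambda>v. map_pmf (moran_update S v) (pmf_of_set (out v)))"
  unfolding moran_step_def choice_weight_def[abs_def] moran_update_def[abs_def] ..

lemma moran_update_subset: "S \<subseteq> V \<Longrightarrow> v \<in> V \<Longrightarrow> w \<in> out v \<Longrightarrow> moran_update S v w \<subseteq> V"
  using out_subset by (auto simp: moran_update_def)

lemma set_pmf_moran_step:
  assumes "S \<subseteq> V" shows "set_pmf (moran_step V out r S) \<subseteq> Pow V"
proof
  fix T assume "T \<in> set_pmf (moran_step V out r S)"
  then obtain v w where v: "v \<in> set_pmf (embed_pmf (choice_weight S))"
    and w: "w \<in> set_pmf (pmf_of_set (out v))" and T: "T = moran_update S v w"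
    unfolding moran_step_eq by auto
  have "v \<in> V" using v set_pmf_choice_weight by blast
  then show "T \<in> Pow V"
    using w T moran_update_subset[OF assms] out_nonempty finite_out by auto
qed

lemma moran_dist_Suc:
  "moran_dist V out r x0 (Suc t) = bind_pmf (moran_dist V out r x0 t) (moran_step V out r)"
  by (simp add: moran_dist_def)

lemma set_pmf_moran_dist: "x0 \<in> V \<Longrightarrow> set_pmf (moran_dist V out r x0 t) \<subseteq> Pow V"
proof (induction t)
  case (Suc t)
  then show ?case using set_pmf_moran_step unfolding moran_dist_Suc by (auto simp: set_bind_pmf)
qed (simp add: moran_dist_def)

lemma sum_pmf_moran_step:
  assumes "S \<subseteq> V"
  shows "(\<Sum>T\<in>Pow V. g T * pmf (moran_step V out r S) T) = step_expectation V out r S g"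
proof -
  let ?update = "\<lambda>v. map_pmf (moran_update S v) (pmf_of_set (out v))"
  have update: "(\<Sum>T\<in>Pow V. g T * pmf (?update v) T)
      = (\<Sum>w\<in>out v. g (moran_update S v w)) / card (out v)" if v: "v \<in> V" for v
  proof -
    have "(\<Sum>T\<in>Pow V. g T * pmf (?update v) T) = (\<integral>T. g T \<partial>measure_pmf (?update v))"
      by (rule integral_measure_pmf_real[symmetric])
        (use finite_V out_nonempty[OF v] finite_out[OF v] moran_update_subset[OF assms v] in auto)
    also have "\<dots> = (\<Sum>w\<in>out v. g (moran_update S v w)) / card (out v)"
      using out_nonempty[OF v] finite_out[OF v] by (simp add: integral_pmf_of_set)
    finally show ?thesis .
  qed
  have step: "pmf (moran_step V out r S) T = (\<Sum>v\<in>V. pmf (?update v) T * choice_weight S v)" for T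
    unfolding moran_step_eq pmf_bind
    by (subst integral_measure_pmf_real[of V])
      (use finite_V set_pmf_choice_weight in \<open>auto simp: pmf_choice_weight\<close>)
  have "(\<Sum>T\<in>Pow V. g T * pmf (moran_step V out r S) T)
      = (\<Sum>v\<in>V. choice_weight S v * (\<Sum>T\<in>Pow V. g T * pmf (?update v) T))"
    unfolding step sum_distrib_left by (subst sum.swap) (simp add: mult_ac)
  also have "\<dots> = step_expectation V out r S g"
    unfolding step_expectation_def using update by (intro sum.cong) (auto simp: choice_weight_def)
  finally show ?thesis .
qed

lemma sum_pmf_bind_moran_step:
  assumes "set_pmf M \<subseteq> Pow V"
  shows "(\<Sum>T\<in>Pow V. g T * pmf (bind_pmf M (moran_step V out r)) T)
    = (\<Sum>S\<in>Pow V. pmf M S * step_expectation V out r S g)"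
proof -
  have bind: "pmf (bind_pmf M (moran_step V out r)) T
      = (\<Sum>S\<in>Pow V. pmf (moran_step V out r S) T * pmf M S)" for T
    unfolding pmf_bind by (subst integral_measure_pmf_real[of "Pow V"]) (use finite_V assms in auto)
  have "(\<Sum>T\<in>Pow V. g T * pmf (bind_pmf M (moran_step V out r)) T)
      = (\<Sum>S\<in>Pow V. pmf M S * (\<Sum>T\<in>Pow V. g T * pmf (moran_step V out r S) T))"
    unfolding bind sum_distrib_left by (subst sum.swap) (simp add: mult_ac)
  also have "\<dots> = (\<Sum>S\<in>Pow V. pmf M S * step_expectation V out r S g)"
    by (intro sum.cong) (auto simp: sum_pmf_moran_step)
  finally show ?thesis .
qed

lemma step_expectation_minus:
  "step_expectation V out r S g - g S = (\<Sum>v\<in>V. vertex_drift out r g S v) / total_fitness V r S"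
proof -
  have "(\<Sum>v\<in>V. vertex_drift out r g S v)
      = (\<Sum>v\<in>V. fitness r S v * ((\<Sum>w\<in>out v. g (moran_update S v w)) / card (out v)))
        - total_fitness V r S * g S"
    unfolding vertex_drift_def total_fitness_def
    by (simp add: right_diff_distrib sum_subtractf sum_distrib_right)
  then show ?thesis
    using total_fitness_pos[of S]
    by (simp add: step_expectation_def sum_divide_distrib diff_divide_distrib)
qed

lemma step_expectation_nonneg: "(\<And>T. g T \<ge> 0) \<Longrightarrow> step_expectation V out r S g \<ge> 0"
  unfolding step_expectation_def using fitness_pos[THEN less_imp_le] total_fitness_pos[THEN less_imp_le]
  by (intro sum_nonneg mult_nonneg_nonneg divide_nonneg_nonneg) auto

lemma sum_pmf_potential_increment:
  assumes M: "set_pmf M \<subseteq> Pow V" and N: "N \<subseteq> Pow V"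
    and sub: "\<And>S. S \<subseteq> V \<Longrightarrow> \<phi> S + (if S \<in> N then c else 0) \<le> step_expectation V out r S \<phi>"
  shows "(\<Sum>S\<in>Pow V. \<phi> S * pmf M S) + c * (\<Sum>S\<in>N. pmf M S)
    \<le> (\<Sum>S\<in>Pow V. \<phi> S * pmf (bind_pmf M (moran_step V out r)) S)"
proof -
  have "(\<Sum>S\<in>Pow V. \<phi> S * pmf M S) + c * (\<Sum>S\<in>N. pmf M S)
      = (\<Sum>S\<in>Pow V. \<phi> S * pmf M S + (if S \<in> N then c * pmf M S else 0))"
    unfolding sum.distrib sum_distrib_left using N finite_V by (simp add: sum.If_cases Int_absorb1)
  also have "\<dots> \<le> (\<Sum>S\<in>Pow V. pmf M S * step_expectation V out r S \<phi>)"
  proof (rule sum_mono)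
    fix S assume "S \<in> Pow V"
    then have "\<phi> S + (if S \<in> N then c else 0) \<le> step_expectation V out r S \<phi>" by (simp add: sub)
    from mult_left_mono[OF this pmf_nonneg[of M S]]
    show "\<phi> S * pmf M S + (if S \<in> N then c * pmf M S else 0) \<le> pmf M S * step_expectation V out r S \<phi>"
      by (simp add: algebra_simps split: if_splits)
  qed
  also have "\<dots> = (\<Sum>S\<in>Pow V. \<phi> S * pmf (bind_pmf M (moran_step V out r)) S)"
    using sum_pmf_bind_moran_step[OF M] by simp
  finally show ?thesis .
qed

lemma sum_pmf_potential_le:
  assumes "\<And>S. \<phi> S \<le> 1"
  shows "(\<Sum>S\<in>Pow V. \<phi> S * pmf M S) \<le> pmf M {} + (\<Sum>S\<in>{S\<in>Pow V. S \<noteq> {} \<and> \<phi> S > 0}. pmf M S)"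
proof -
  let ?N = "{S\<in>Pow V. S \<noteq> {} \<and> \<phi> S > 0}"
  have "(\<Sum>S\<in>Pow V. \<phi> S * pmf M S)
      \<le> (\<Sum>S\<in>Pow V. (if S = {} then pmf M S else 0) + (if S \<in> ?N then pmf M S else 0))"
  proof (rule sum_mono)
    fix S assume "S \<in> Pow V"
    then show "\<phi> S * pmf M S \<le> (if S = {} then pmf M S else 0) + (if S \<in> ?N then pmf M S else 0)"
      using mult_right_mono[OF assms pmf_nonneg[of M S]] mult_right_mono[of "\<phi> S" 0 "pmf M S"]
      by (auto simp: not_less)
  qed
  also have "\<dots> = pmf M {} + (\<Sum>S\<in>?N. pmf M S)"
    unfolding sum.distrib using finite_V by (simp add: sum.If_cases Int_def)
  finally show ?thesis .
qed

lemma extinction_prob_ge_submartingale: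
  assumes x0: "x0 \<in> V" and bounds: "\<And>S. 0 \<le> \<phi> S" "\<And>S. \<phi> S \<le> 1"
    and sub: "\<And>S. S \<subseteq> V \<Longrightarrow> \<phi> S \<le> step_expectation V out r S \<phi>"
    and strict: "\<And>S. S \<subseteq> V \<Longrightarrow> S \<noteq> {} \<Longrightarrow> \<phi> S > 0 \<Longrightarrow> \<phi> S < step_expectation V out r S \<phi>"
  shows "\<phi> {x0} \<le> extinction_prob V out r x0"
proof -
  define N where "N = {S\<in>Pow V. S \<noteq> {} \<and> \<phi> S > 0}"
  have N: "N \<subseteq> Pow V" "finite N" unfolding N_def using finite_V by auto
  have "\<exists>c>0. \<forall>S\<in>N. c \<le> step_expectation V out r S \<phi> - \<phi> S"
    by (rule finite_uniform_lower_bound[OF N(2)]) (use strict in \<open>auto simp: N_def\<close>)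
  then obtain c where c: "c > 0" and c_le: "\<forall>S\<in>N. c \<le> step_expectation V out r S \<phi> - \<phi> S"
    by blast
  have gap: "\<phi> S + c \<le> step_expectation V out r S \<phi>" if "S \<in> N" for S
    using bspec[OF c_le that] by linarith
  define D where "D t = moran_dist V out r x0 t" for t
  define \<psi> where "\<psi> t = (\<Sum>S\<in>Pow V. \<phi> S * pmf (D t) S)" for t
  define \<pi> where "\<pi> t = (\<Sum>S\<in>N. pmf (D t) S)" for t
  have set_D: "set_pmf (D t) \<subseteq> Pow V" for t
    unfolding D_def using set_pmf_moran_dist[OF x0] .
  have \<psi>_le: "\<psi> t \<le> 1" for t
  proof -
    have "\<psi> t \<le> (\<Sum>S\<in>Pow V. pmf (D t) S)"
      unfolding \<psi>_def using bounds by (intro sum_mono) (simp add: mult_left_le_one_le)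
    also have "\<dots> = 1" by (rule sum_pmf_eq_1) (use finite_V set_D in auto)
    finally show ?thesis .
  qed
  have increment: "\<psi> t + c * \<pi> t \<le> \<psi> (Suc t)" for t
    unfolding \<psi>_def \<pi>_def D_def moran_dist_Suc
    using sum_pmf_potential_increment[OF set_D[unfolded D_def] N(1)] sub gap by force
  have "\<pi> t \<ge> 0" for t by (simp add: \<pi>_def sum_nonneg)
  have bdd: "bdd_above (range (\<lambda>t. pmf (D t) {}))"
    by (rule bdd_aboveI[of _ 1]) (auto simp: pmf_le_1)
  show ?thesis
  proof (rule field_le_epsilon)
    fix e :: real assume "e > 0"
    then obtain t where "\<pi> t \<le> e" "\<psi> 0 \<le> \<psi> t"
      using bounded_increments_small_term[of c \<psi> 1 \<pi> e] c \<psi>_le increment \<open>\<And>t. \<pi> t \<ge> 0\<close> by blast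
    moreover have "\<psi> t \<le> pmf (D t) {} + \<pi> t"
      unfolding \<psi>_def \<pi>_def N_def using sum_pmf_potential_le[OF bounds(2)] .
    moreover have "\<psi> 0 = \<phi> {x0}"
      using x0 finite_V by (simp add: \<psi>_def D_def moran_dist_def indicator_def sum.delta')
    moreover have "pmf (D t) {} \<le> extinction_prob V out r x0"
      unfolding extinction_prob_def D_def by (rule cSUP_upper) (use bdd[unfolded D_def] in auto)
    ultimately show "\<phi> {x0} \<le> extinction_prob V out r x0 + e" by linarith
  qed
qed

lemma extinction_prob_ge_potential:
  assumes x0: "x0 \<in> V" and bounds: "\<And>S. 0 \<le> \<phi> S" "\<And>S. \<phi> S \<le> 1"
    and drift: "\<And>S. S \<subseteq> V \<Longrightarrow> \<phi> S > 0 \<Longrightarrow> 0 \<le> (\<Sum>v\<in>V. vertex_drift out r \<phi> S v)"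
    and strict: "\<And>S. S \<subseteq> V \<Longrightarrow> S \<noteq> {} \<Longrightarrow> \<phi> S > 0 \<Longrightarrow> 0 < (\<Sum>v\<in>V. vertex_drift out r \<phi> S v)"
  shows "\<phi> {x0} \<le> extinction_prob V out r x0"
proof (rule extinction_prob_ge_submartingale[OF x0 bounds])
  fix S assume S: "S \<subseteq> V"
  show "\<phi> S \<le> step_expectation V out r S \<phi>"
  proof (cases "\<phi> S > 0")
    case True
    then show ?thesis
      using drift[OF S True] step_expectation_minus[of S \<phi>] total_fitness_pos[of S]
      by (metis diff_ge_0_iff_ge divide_nonneg_pos)
  next
    case False
    then show ?thesis using bounds(1)[of S] step_expectation_nonneg[OF bounds(1)] by simp
  qed
  assume "S \<noteq> {}" "\<phi> S > 0"
  then show "\<phi> S < step_expectation V out r S \<phi>"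
    using strict[OF S] step_expectation_minus[of S \<phi>] total_fitness_pos[of S]
    by (metis diff_gt_0_iff_gt divide_pos_pos)
qed

end

text \<open>A set \<open>P \<subseteq> {1..k}\<close> records the mutant positions on a path \<open>v\<^sub>1 \<rightarrow> \<dots> \<rightarrow> v\<^sub>k\<close>. The tail
  penalty is \<open>C\<close> times the number of steps the rearmost mutant beyond position 1 still needs
  to leave the path.\<close>

definition upper_positions :: "nat set \<Rightarrow> nat set" where
  "upper_positions P = {j\<in>P. 2 \<le> j}"

definition tail_penalty :: "real \<Rightarrow> nat \<Rightarrow> nat set \<Rightarrow> real" where
  "tail_penalty C k P =
     (if upper_positions P = {} then 0 else C * (real k + 1 - real (Min (upper_positions P))))"

definition head_penalty :: "real \<Rightarrow> real \<Rightarrow> nat set \<Rightarrow> real" where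
  "head_penalty E D P = (if 1 \<in> P then (if 2 \<in> P then E else D) else 0)"

definition path_penalty :: "real \<Rightarrow> real \<Rightarrow> real \<Rightarrow> nat \<Rightarrow> nat set \<Rightarrow> real" where
  "path_penalty C E D k P = head_penalty E D P + tail_penalty C k P"

text \<open>The decrease of the penalty when \<open>v\<^sub>j\<close> reproduces onto \<open>v\<^sub>j\<^sub>+\<^sub>1\<close>, weighted by the fitness
  of \<open>v\<^sub>j\<close>.\<close>

definition path_drift :: "real \<Rightarrow> real \<Rightarrow> real \<Rightarrow> nat \<Rightarrow> real \<Rightarrow> nat set \<Rightarrow> nat \<Rightarrow> real" where
  "path_drift C E D k r P j =
     (if j \<in> P then - r * (path_penalty C E D k (insert (j + 1) P) - path_penalty C E D k P)
      else path_penalty C E D k P - path_penalty C E D k (P - {j + 1}))"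

lemma finite_upper_positions: "P \<subseteq> {1..k} \<Longrightarrow> finite (upper_positions P)"
  unfolding upper_positions_def by (rule finite_subset[of _ "{1..k}"]) auto

lemma upper_positions_1:
  "upper_positions (P - {1}) = upper_positions P" "upper_positions (insert 1 P) = upper_positions P"
  unfolding upper_positions_def by auto

lemma upper_positions_remove: "upper_positions (P - {b}) = upper_positions P - {b}"
  unfolding upper_positions_def by auto

lemma tail_penalty_nonneg:
  assumes "P \<subseteq> {1..k}" "C \<ge> 0"
  shows "tail_penalty C k P \<ge> 0"
proof (cases "upper_positions P = {}")
  case False
  then have "Min (upper_positions P) \<in> upper_positions P"
    using finite_upper_positions[OF assms(1)] by simp
  then have "Min (upper_positions P) \<le> k" using assms(1) unfolding upper_positions_def by auto
  then show ?thesis using False assms(2) unfolding tail_penalty_def by simp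
qed (simp add: tail_penalty_def)

lemma tail_penalty_remove_le:
  assumes "P \<subseteq> {1..k}" "C \<ge> 0"
  shows "tail_penalty C k (P - {b}) \<le> tail_penalty C k P"
proof (cases "upper_positions P - {b} = {}")
  case True
  then show ?thesis
    using tail_penalty_nonneg[OF assms] by (simp add: tail_penalty_def upper_positions_remove)
next
  case False
  have "Min (upper_positions P) \<le> Min (upper_positions P - {b})"
    using False finite_upper_positions[OF assms(1)] by (intro Min_antimono) auto
  then have "C * (real k + 1 - real (Min (upper_positions P - {b})))
      \<le> C * (real k + 1 - real (Min (upper_positions P)))"
    using assms(2) by (intro mult_left_mono) auto
  then show ?thesis using False unfolding tail_penalty_def upper_positions_remove by auto
qed

lemma tail_penalty_remove_min:
  assumes P: "P \<subseteq> {1..k}" and "C \<ge> 0" "upper_positions P \<noteq> {}" and a: "a = Min (upper_positions P)"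
  shows "tail_penalty C k P - tail_penalty C k (P - {a}) \<ge> C"
proof -
  have fin: "finite (upper_positions P)" using finite_upper_positions[OF P] .
  have "a \<in> upper_positions P" using assms(3) a fin by simp
  then have ak: "a \<le> k" using P unfolding upper_positions_def by auto
  show ?thesis
  proof (cases "upper_positions P - {a} = {}")
    case True
    have "C * 1 \<le> C * (real k + 1 - real a)" using ak assms(2) by (intro mult_left_mono) auto
    then show ?thesis using True assms(3) a by (simp add: tail_penalty_def upper_positions_remove)
  next
    case False
    let ?b = "Min (upper_positions P - {a})"
    have "?b \<in> upper_positions P - {a}" using False fin by (intro Min_in) auto
    moreover have "\<forall>x\<in>upper_positions P. a \<le> x" using a fin by simp
    ultimately have "real ?b \<ge> real a + 1" by fastforce
    moreover have "tail_penalty C k P - tail_penalty C k (P - {a}) = C * (real ?b - real a)"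
      using False assms(3) a unfolding tail_penalty_def upper_positions_remove by (simp add: algebra_simps)
    ultimately show ?thesis using assms(2) mult_left_mono[of 1 "real ?b - real a" C] by simp
  qed
qed

lemma tail_penalty_insert_above:
  assumes "P \<subseteq> {1..k}" "j \<in> P" "j \<ge> 2"
  shows "tail_penalty C k (insert (j + 1) P) = tail_penalty C k P"
proof -
  have fin: "finite (upper_positions P)" using finite_upper_positions[OF assms(1)] .
  have j: "j \<in> upper_positions P" using assms unfolding upper_positions_def by auto
  have insert: "upper_positions (insert (j + 1) P) = insert (j + 1) (upper_positions P)"
    using assms(3) unfolding upper_positions_def by auto
  have "Min (insert (j + 1) (upper_positions P)) = min (j + 1) (Min (upper_positions P))"
    using j fin by (intro Min_insert) auto
  also have "\<dots> = Min (upper_positions P)" using Min_le[OF fin j] by simp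
  finally have "Min (insert (j + 1) (upper_positions P)) = Min (upper_positions P)" .
  then show ?thesis using insert j unfolding tail_penalty_def by auto
qed

lemma head_penalty_other:
  "b \<noteq> 1 \<Longrightarrow> b \<noteq> 2 \<Longrightarrow> head_penalty E D (P - {b}) = head_penalty E D P"
  "b \<noteq> 1 \<Longrightarrow> b \<noteq> 2 \<Longrightarrow> head_penalty E D (insert b P) = head_penalty E D P"
  unfolding head_penalty_def by auto

locale path_penalty_bounds =
  fixes C E D M r :: real and k :: nat
  assumes C_nonneg: "C \<ge> 0" and M_ge_2: "M \<ge> 2" and r_ge_1: "r \<ge> 1" and k_pos: "k \<ge> 1"
    and E_def: "E = C / (M - 1)" and D_def: "D = r * C * k / (M - 1)"
begin

lemma E_nonneg: "E \<ge> 0"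
  using C_nonneg M_ge_2 E_def by simp

lemma E_le_D: "E \<le> D"
proof -
  have "1 * 1 \<le> r * real k" using r_ge_1 k_pos by (intro mult_mono) auto
  then have "C * 1 \<le> C * (r * real k)" using C_nonneg by (intro mult_left_mono) auto
  then show ?thesis unfolding E_def D_def using M_ge_2 by (simp add: divide_right_mono mult_ac)
qed

lemma D_nonneg: "D \<ge> 0"
  using E_nonneg E_le_D by simp

abbreviation "H P \<equiv> path_penalty C E D k P"
abbreviation "T P j \<equiv> path_drift C E D k r P j"

lemma head_penalty_nonneg: "head_penalty E D P \<ge> 0"
  using E_nonneg D_nonneg by (simp add: head_penalty_def)

lemma path_penalty_nonneg: "P \<subseteq> {1..k} \<Longrightarrow> H P \<ge> 0"
  unfolding path_penalty_def using tail_penalty_nonneg[of P k C] C_nonneg head_penalty_nonneg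
  by (simp add: add_nonneg_nonneg)

lemma path_penalty_remove_1: "H P - H (P - {1}) = head_penalty E D P"
  unfolding path_penalty_def tail_penalty_def upper_positions_1 by (simp add: head_penalty_def)

lemma path_penalty_insert_1_le: "H (insert 1 P) - H P \<le> D"
  unfolding path_penalty_def tail_penalty_def upper_positions_1 using E_le_D D_nonneg
  by (simp add: head_penalty_def)

lemma path_drift_nonneg:
  assumes P: "P \<subseteq> {1..k}" and j: "j \<in> {1..<k}" and not_head: "\<not> (j = 1 \<and> 1 \<in> P \<and> 2 \<notin> P)"
  shows "T P j \<ge> 0"
proof (cases "j \<in> P")
  case True
  show ?thesis
  proof (cases "j + 1 \<in> P")
    case False
    then have j2: "j \<ge> 2" using j not_head True by (cases "j = 1") (auto simp: numeral_2_eq_2)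
    have "H (insert (j + 1) P) = H P"
      unfolding path_penalty_def
      using tail_penalty_insert_above[OF P True j2] head_penalty_other(2)[of "j + 1"] j2 by simp
    then show ?thesis using True by (simp add: path_drift_def)
  qed (use True in \<open>simp add: path_drift_def insert_absorb\<close>)
next
  case False
  show ?thesis
  proof (cases "j + 1 \<in> P")
    case True
    have "head_penalty E D (P - {j + 1}) = head_penalty E D P"
      using False j by (cases "j = 1") (auto simp: head_penalty_def intro: head_penalty_other(1))
    then have "H (P - {j + 1}) \<le> H P"
      unfolding path_penalty_def using tail_penalty_remove_le[OF P C_nonneg] by simp
    then show ?thesis using False by (simp add: path_drift_def)
  qed (use False in \<open>simp add: path_drift_def\<close>)
qed

lemma path_drift_before_min:
  assumes P: "P \<subseteq> {1..k}" and upper: "upper_positions P \<noteq> {}" and a: "a = Min (upper_positions P)"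
    and before: "a - 1 \<notin> P"
  shows "T P (a - 1) \<ge> C"
proof -
  have "a \<in> upper_positions P" using upper a finite_upper_positions[OF P] by simp
  then have a2: "a \<ge> 2" unfolding upper_positions_def by auto
  then have "head_penalty E D (P - {a}) = head_penalty E D P"
    using before by (cases "a = 2") (auto simp: head_penalty_def intro: head_penalty_other(1))
  moreover have "tail_penalty C k P - tail_penalty C k (P - {a}) \<ge> C"
    using tail_penalty_remove_min[OF P C_nonneg upper a] .
  moreover have "a - 1 + 1 = a" using a2 by simp
  ultimately show ?thesis using before unfolding path_drift_def path_penalty_def by simp
qed

lemma path_drift_1_ge:
  assumes P: "P \<subseteq> {1..k}" and "1 \<in> P" "2 \<notin> P" "k \<ge> 2"
  shows "T P 1 \<ge> - r * (C * (real k - 1) + E - D)"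
proof -
  have insert: "upper_positions (insert 2 P) = insert 2 (upper_positions P)"
    unfolding upper_positions_def by auto
  have "Min (insert 2 (upper_positions P)) = 2"
    using finite_upper_positions[OF P] by (intro Min_eqI) (auto simp: upper_positions_def)
  then have "tail_penalty C k (insert 2 P) = C * (real k - 1)"
    unfolding tail_penalty_def insert by simp
  moreover have "head_penalty E D (insert 2 P) = E" "head_penalty E D P = D"
    using assms by (auto simp: head_penalty_def)
  moreover have "tail_penalty C k P \<ge> 0" using tail_penalty_nonneg[OF P C_nonneg] .
  ultimately have "H (insert 2 P) - H P \<le> C * (real k - 1) + E - D" unfolding path_penalty_def by simp
  then have "r * (H (insert 2 P) - H P) \<le> r * (C * (real k - 1) + E - D)"
    using r_ge_1 by (intro mult_left_mono) auto
  then show ?thesis using assms unfolding path_drift_def by (simp add: numeral_2_eq_2)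
qed

lemma path_drift_le_sum:
  assumes P: "P \<subseteq> {1..k}" and i: "i \<in> {1..<k}" and no_gap: "i = 1 \<or> \<not> (1 \<in> P \<and> 2 \<notin> P)"
  shows "T P i \<le> (\<Sum>j\<in>{1..<k}. T P j)"
  by (rule member_le_sum[OF i]) (use no_gap in \<open>auto intro: path_drift_nonneg[OF P]\<close>)

lemma sum_path_drift_ge_head_alone:
  assumes P: "P \<subseteq> {1..k}" and head: "1 \<in> P" "2 \<notin> P"
  shows "r * C * k + (\<Sum>j\<in>{1..<k}. T P j) \<ge> C"
proof (cases "k \<ge> 2")
  case True
  have "T P 1 \<le> (\<Sum>j\<in>{1..<k}. T P j)" using True by (intro path_drift_le_sum[OF P]) auto
  moreover have "T P 1 \<ge> - r * (C * (real k - 1) + E - D)" using path_drift_1_ge[OF P head True] .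
  moreover have "r * (D - E) \<ge> 0" using E_le_D r_ge_1 by simp
  moreover have "r * C \<ge> C" using mult_right_mono[OF r_ge_1 C_nonneg] by simp
  ultimately show ?thesis by (auto simp: algebra_simps)
next
  case False
  then have "k = 1" using k_pos by simp
  then show ?thesis using mult_right_mono[OF r_ge_1 C_nonneg] by simp
qed

lemma sum_path_drift_ge_no_head:
  assumes P: "P \<subseteq> {1..k}" and "1 \<notin> P" "P \<noteq> {}"
  shows "(\<Sum>j\<in>{1..<k}. T P j) \<ge> C"
proof -
  have "2 \<le> j" if "j \<in> P" for j
    using that P assms(2) by (cases "j = 1") auto
  then have upper: "upper_positions P = P" unfolding upper_positions_def by auto
  define a where "a = Min (upper_positions P)"
  have "finite P" using finite_subset[OF P] by simp
  then have a: "a \<in> P" "\<And>b. b \<in> P \<Longrightarrow> a \<le> b" using assms(3) upper a_def by simp_all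
  then have a2: "a \<ge> 2" using upper unfolding upper_positions_def by auto
  have before: "a - 1 \<notin> P" using a(2)[of "a - 1"] a2 by auto
  have "T P (a - 1) \<le> (\<Sum>j\<in>{1..<k}. T P j)"
    using a(1) a2 P assms(2) by (intro path_drift_le_sum[OF P]) auto
  moreover have "T P (a - 1) \<ge> C" using path_drift_before_min[OF P _ a_def before] upper assms(3) by simp
  ultimately show ?thesis by simp
qed

text \<open>The factor \<open>M - 1\<close> counts the reservoir vertices other than \<open>x\<^sub>0\<close>, each of which resets
  \<open>v\<^sub>i\<^sub>,\<^sub>1\<close> to a non-mutant.\<close>

lemma sum_path_drift_ge:
  assumes P: "P \<subseteq> {1..k}"
  shows "(M - 1) * (H P - H (P - {1})) + (\<Sum>j\<in>{1..<k}. T P j) \<ge> (if P = {} then 0 else C)"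
proof -
  have head: "(M - 1) * (H P - H (P - {1})) = (M - 1) * head_penalty E D P"
    using path_penalty_remove_1 by simp
  have M1: "M - 1 \<ge> 1" using M_ge_2 by simp
  consider (no_gap) "\<not> (1 \<in> P \<and> 2 \<notin> P)" "1 \<in> P \<or> P = {}" | (alone) "1 \<in> P" "2 \<notin> P"
    | (no_head) "1 \<notin> P" "P \<noteq> {}" by blast
  then show ?thesis
  proof cases
    case no_gap
    then have "(\<Sum>j\<in>{1..<k}. T P j) \<ge> 0" by (intro sum_nonneg path_drift_nonneg[OF P]) auto
    moreover have "(M - 1) * (H P - H (P - {1})) = (if P = {} then 0 else C)"
      using head no_gap M1 E_def by (auto simp: head_penalty_def)
    ultimately show ?thesis by simp
  next
    case alone
    then show ?thesis
      using head M1 D_def sum_path_drift_ge_head_alone[OF P alone] by (auto simp: head_penalty_def)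
  next
    case no_head
    then show ?thesis
      using head sum_path_drift_ge_no_head[OF P no_head] by (simp add: head_penalty_def)
  qed
qed

end

lemma reservoirs_eq: "reservoirs l m = (\<lambda>(i, a). Res i a) ` ({1..l} \<times> {1..m})"
  unfolding reservoirs_def by auto

lemma finite_reservoirs: "finite (reservoirs l m)"
  unfolding reservoirs_eq by simp

lemma card_reservoirs: "card (reservoirs l m) = l * m"
proof -
  have "inj_on (\<lambda>(i, a). Res i a) ({1..l} \<times> {1..m})" by (auto simp: inj_on_def)
  then show ?thesis unfolding reservoirs_eq by (simp add: card_image)
qed

lemma superstar_V_eq:
  "superstar_V k l m = reservoirs l m \<union> (\<lambda>(i, j). Path i j) ` ({1..l} \<times> {1..k}) \<union> {Centre}"
proof -
  have "{Path i j |i j. i \<in> {1..l} \<and> j \<in> {1..k}} = (\<lambda>(i, j). Path i j) ` ({1..l} \<times> {1..k})"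
    by auto
  then show ?thesis unfolding superstar_V_def by simp
qed

lemma superstar_V_cases:
  assumes "v \<in> superstar_V k l m"
  obtains (reservoir) i a where "v = Res i a" "i \<in> {1..l}" "a \<in> {1..m}"
    | (path) i j where "v = Path i j" "i \<in> {1..l}" "j \<in> {1..k}"
    | (centre) "v = Centre"
  using assms unfolding superstar_V_def reservoirs_def by auto

lemma moran_graph_superstar:
  assumes "k \<ge> 1" "l \<ge> 1" "m \<ge> 1" "r > 0"
  shows "moran_graph (superstar_V k l m) (superstar_out k l m) r"
proof
  show "finite (superstar_V k l m)" unfolding superstar_V_eq using finite_reservoirs by simp
  show "superstar_V k l m \<noteq> {}" unfolding superstar_V_def by simp
  fix v assume v: "v \<in> superstar_V k l m"
  have "superstar_out k l m v \<noteq> {} \<and> finite (superstar_out k l m v)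
      \<and> superstar_out k l m v \<subseteq> superstar_V k l m"
    using v
  proof (cases rule: superstar_V_cases)
    case centre
    have "Res 1 1 \<in> reservoirs l m" using assms unfolding reservoirs_def by auto
    then show ?thesis using centre finite_reservoirs by (auto simp: superstar_V_def)
  qed (use assms in \<open>auto simp: superstar_V_def\<close>)
  then show "superstar_out k l m v \<noteq> {}" "finite (superstar_out k l m v)"
    "superstar_out k l m v \<subseteq> superstar_V k l m" by auto
qed (use assms in simp)

text \<open>\<open>wc\<close> is the penalty of a mutant centre, \<open>C\<close>, \<open>E\<close>, \<open>D\<close> are the path penalty weights, and
  \<open>lam\<close> scales the penalty while \<open>x\<^sub>0\<close> is a mutant.\<close>

locale superstar_potential =
  fixes k l m :: nat and r p wc C E D lam :: real and i0 a0 :: nat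
  assumes k_pos: "k \<ge> 1" and l_ge_2: "l \<ge> 2" and m_ge_2: "m \<ge> 2" and r_gt_1: "r > 1"
    and i0: "i0 \<in> {1..l}" and a0: "a0 \<in> {1..m}"
    and p_pos: "p > 0" and p_le: "p \<le> 1/4"
    and wc_def: "wc = 2 * r / (real l - 1)" and C_def: "C = 2 * r * wc"
    and E_def: "E = C / (real m - 1)" and D_def: "D = r * C * k / (real m - 1)"
    and lam_def: "lam = 2 * p"
    and D_le_1: "D \<le> 1" and p_small: "8 * p * r * D * real l * real m < 1"
begin

abbreviation "VV \<equiv> superstar_V k l m"
abbreviation "OUTS \<equiv> superstar_out k l m"
abbreviation "RR \<equiv> reservoirs l m"
abbreviation "x0 \<equiv> Res i0 a0"

lemma wc_pos: "wc > 0"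
  using wc_def r_gt_1 l_ge_2 by simp

lemma C_pos: "C > 0"
  using C_def wc_pos r_gt_1 by simp

lemma lam_bounds: "lam > 0" "lam \<le> 1/2"
  using lam_def p_pos p_le by auto

sublocale path: path_penalty_bounds C E D "real m" r k
  by unfold_locales (use C_pos m_ge_2 r_gt_1 k_pos E_def D_def in auto)

sublocale moran_graph VV OUTS r
  by (rule moran_graph_superstar) (use k_pos l_ge_2 m_ge_2 r_gt_1 in auto)

lemma x0_reservoir: "x0 \<in> RR"
  using i0 a0 unfolding reservoirs_def by auto

lemma x0_vertex: "x0 \<in> VV"
  using x0_reservoir unfolding superstar_V_def by auto

lemma sum_reservoirs_split: "(\<Sum>w\<in>RR. g w) = g x0 + (\<Sum>w\<in>RR - {x0}. g w)"
  using finite_reservoirs x0_reservoir by (simp add: sum.remove)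

definition track :: "ss_vertex set" where
  "track = insert x0 (insert Centre (Path i0 ` {1..k}))"

definition path_mutants :: "ss_vertex set \<Rightarrow> nat set" where
  "path_mutants S = {j. Path i0 j \<in> S}"

definition centre_penalty :: "bool \<Rightarrow> real" where
  "centre_penalty c = (if c then wc else 0)"

definition penalty_scale :: "bool \<Rightarrow> real" where
  "penalty_scale x = (if x then lam else 1)"

definition raw_potential :: "bool \<Rightarrow> bool \<Rightarrow> nat set \<Rightarrow> real" where
  "raw_potential x c P =
     (if x then p - lam * (centre_penalty c + path.H P) else 1 - (centre_penalty c + path.H P))"

definition potential :: "ss_vertex set \<Rightarrow> real" where
  "potential S =
     (if S \<subseteq> track then max 0 (raw_potential (x0 \<in> S) (Centre \<in> S) (path_mutants S)) else 0)"

abbreviation "drift \<equiv> vertex_drift OUTS r potential"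

text \<open>The summands bound the drift contributed by, in this order: the reservoir of \<open>x\<^sub>0\<close>
  together with the path of its branch, \<open>x\<^sub>0\<close> itself, the last path vertices of the other
  branches, \<open>v\<^sub>i\<^sub>,\<^sub>k\<close> of the branch of \<open>x\<^sub>0\<close>, and the centre.\<close>

definition drift_lower_bound :: "bool \<Rightarrow> bool \<Rightarrow> nat set \<Rightarrow> real" where
  "drift_lower_bound x c P =
     penalty_scale x * ((real m - 1) * (path.H P - path.H (P - {1})) + (\<Sum>j\<in>{1..<k}. path.T P j))
     + (if x then - r * lam * (path.H (insert 1 P) - path.H P) else path.H P - path.H (P - {1}))
     + (real l - 1) * (penalty_scale x * centre_penalty c)
     + (if k \<in> P then r * penalty_scale x * (centre_penalty c - wc) else penalty_scale x * centre_penalty c)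
     + (if c then r * (raw_potential True True P / (real l * real m) - raw_potential x c P)
        else (raw_potential False False P - raw_potential x c P) / (real l * real m))"

lemma path_mutants_subset: "S \<subseteq> track \<Longrightarrow> path_mutants S \<subseteq> {1..k}"
  unfolding path_mutants_def track_def by auto

lemma track_insert:
  "j \<in> {1..k} \<Longrightarrow> S \<subseteq> track \<Longrightarrow> insert (Path i0 j) S \<subseteq> track"
  "S \<subseteq> track \<Longrightarrow> insert Centre S \<subseteq> track"
  "S \<subseteq> track \<Longrightarrow> insert x0 S \<subseteq> track"
  unfolding track_def by auto

lemma path_mutants_simps:
  "path_mutants (S - {Path i0 j}) = path_mutants S - {j}"
  "path_mutants (insert (Path i0 j) S) = insert j (path_mutants S)"
  "path_mutants (S - {Centre}) = path_mutants S" "path_mutants (insert Centre S) = path_mutants S"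
  "path_mutants (S - {Res i a}) = path_mutants S" "path_mutants (insert (Res i a) S) = path_mutants S"
  unfolding path_mutants_def by auto

lemma centre_penalty_nonneg: "centre_penalty c \<ge> 0"
  using wc_pos by (simp add: centre_penalty_def)

lemma raw_potential_le_1:
  assumes "P \<subseteq> {1..k}" shows "raw_potential x c P \<le> 1"
proof -
  have "0 \<le> centre_penalty c + path.H P"
    using centre_penalty_nonneg path.path_penalty_nonneg[OF assms] by simp
  moreover from this have "0 \<le> lam * (centre_penalty c + path.H P)" using lam_bounds by simp
  ultimately show ?thesis using p_le by (auto simp: raw_potential_def)
qed

lemma raw_potential_path_diff:
  "raw_potential x c Q - raw_potential x c P = penalty_scale x * (path.H P - path.H Q)"
  unfolding raw_potential_def penalty_scale_def by (simp add: algebra_simps)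

lemma raw_potential_centre_diff:
  "raw_potential x False P - raw_potential x c P = penalty_scale x * centre_penalty c"
  "raw_potential x True P - raw_potential x c P = penalty_scale x * (centre_penalty c - wc)"
  unfolding raw_potential_def penalty_scale_def centre_penalty_def by (auto simp: algebra_simps)

lemma potential_bounds: "0 \<le> potential S" "potential S \<le> 1"
  using raw_potential_le_1[OF path_mutants_subset] by (auto simp: potential_def)

lemma potential_ge_raw:
  "T \<subseteq> track \<Longrightarrow> raw_potential (x0 \<in> T) (Centre \<in> T) (path_mutants T) \<le> potential T"
  unfolding potential_def by simp

lemma potential_pos_imp:
  assumes "potential T > 0"
  shows "T \<subseteq> track" "raw_potential (x0 \<in> T) (Centre \<in> T) (path_mutants T) > 0"
  using assms by (auto simp: potential_def split: if_splits)

lemma potential_singleton_x0: "potential {x0} = p"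
proof -
  have "path.H {} = 0"
    by (simp add: path_penalty_def tail_penalty_def head_penalty_def upper_positions_def)
  then show ?thesis
    using p_pos by (simp add: potential_def track_def path_mutants_def raw_potential_def centre_penalty_def)
qed

context
  fixes S assumes S: "S \<subseteq> track"
    and pos: "raw_potential (x0 \<in> S) (Centre \<in> S) (path_mutants S) > 0"
begin

abbreviation "at_x0 \<equiv> x0 \<in> S"
abbreviation "at_centre \<equiv> Centre \<in> S"
abbreviation "PS \<equiv> path_mutants S"
abbreviation "F \<equiv> raw_potential at_x0 at_centre PS"

lemma potential_eq: "potential S = F"
  using pos S by (simp add: potential_def)

lemma potential_remove_path_1:
  "potential (S - {Path i0 1}) - potential S \<ge> penalty_scale at_x0 * (path.H PS - path.H (PS - {1}))"
proof -
  have "raw_potential at_x0 at_centre (PS - {1}) \<le> potential (S - {Path i0 1})"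
    using potential_ge_raw[of "S - {Path i0 1}"] S by (simp add: path_mutants_simps subset_iff)
  then show ?thesis
    using raw_potential_path_diff[of at_x0 at_centre "PS - {1}" PS] potential_eq by linarith
qed

lemma potential_remove_centre:
  "potential (S - {Centre}) - potential S \<ge> penalty_scale at_x0 * centre_penalty at_centre"
proof -
  have "raw_potential at_x0 False PS \<le> potential (S - {Centre})"
    using potential_ge_raw[of "S - {Centre}"] S by (simp add: path_mutants_simps subset_iff)
  then show ?thesis
    using raw_potential_centre_diff(1)[of at_x0 PS at_centre] potential_eq by linarith
qed

lemma drift_reservoir:
  assumes "a \<in> {1..m} - {a0}"
  shows "drift S (Res i0 a) = potential (S - {Path i0 1}) - potential S"
proof -
  have "Res i0 a \<notin> S" using S assms unfolding track_def by auto
  then show ?thesis by (subst vertex_drift_single_out) (auto simp: moran_update_def fitness_def)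
qed

lemma drift_other_path_end:
  assumes "i \<in> {1..l} - {i0}"
  shows "drift S (Path i k) = potential (S - {Centre}) - potential S"
proof -
  have "Path i k \<notin> S" using S assms unfolding track_def by auto
  then show ?thesis by (subst vertex_drift_single_out) (auto simp: moran_update_def fitness_def)
qed

lemma drift_x0_ge:
  "drift S x0 \<ge> (if at_x0 then - r * lam * (path.H (insert 1 PS) - path.H PS)
                 else path.H PS - path.H (PS - {1}))"
proof (cases at_x0)
  case True
  have "potential (insert (Path i0 1) S) \<ge> raw_potential at_x0 at_centre (insert 1 PS)"
    using potential_ge_raw[OF track_insert(1)[OF _ S, of 1]] k_pos True by (simp add: path_mutants_simps)
  then have "potential (insert (Path i0 1) S) - potential S \<ge> lam * (path.H PS - path.H (insert 1 PS))"
    using raw_potential_path_diff[of at_x0 at_centre "insert 1 PS" PS] potential_eq True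
    by (simp add: penalty_scale_def)
  from mult_left_mono[OF this, of r] show ?thesis
    using True r_gt_1 by (simp add: vertex_drift_single_out moran_update_def fitness_def algebra_simps)
next
  case False
  then show ?thesis using potential_remove_path_1
    by (simp add: vertex_drift_single_out moran_update_def fitness_def penalty_scale_def)
qed

lemma drift_path_ge:
  assumes j: "j \<in> {1..<k}"
  shows "drift S (Path i0 j) \<ge> penalty_scale at_x0 * path.T PS j"
proof -
  have out: "OUTS (Path i0 j) = {Path i0 (j + 1)}" using j by simp
  show ?thesis
  proof (cases "j \<in> PS")
    case True
    have "potential (insert (Path i0 (j + 1)) S) \<ge> raw_potential at_x0 at_centre (insert (j + 1) PS)"
      using potential_ge_raw[OF track_insert(1)[OF _ S, of "j + 1"]] j by (simp add: path_mutants_simps)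
    then have "potential (insert (Path i0 (j + 1)) S) - potential S
        \<ge> penalty_scale at_x0 * (path.H PS - path.H (insert (j + 1) PS))"
      using raw_potential_path_diff[of at_x0 at_centre "insert (j + 1) PS" PS] potential_eq by linarith
    from mult_left_mono[OF this, of r] show ?thesis
      using True r_gt_1 unfolding vertex_drift_single_out[where out = OUTS, OF out] path_drift_def
      by (simp add: path_mutants_def moran_update_def fitness_def algebra_simps)
  next
    case False
    have "potential (S - {Path i0 (j + 1)}) \<ge> raw_potential at_x0 at_centre (PS - {j + 1})"
      using potential_ge_raw[of "S - {Path i0 (j + 1)}"] S by (simp add: path_mutants_simps subset_iff)
    then have "potential (S - {Path i0 (j + 1)}) - potential S
        \<ge> penalty_scale at_x0 * (path.H PS - path.H (PS - {j + 1}))"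
      using raw_potential_path_diff[of at_x0 at_centre "PS - {j + 1}" PS] potential_eq by linarith
    then show ?thesis
      using False
      unfolding vertex_drift_single_out[where out = OUTS, OF out] path_drift_def
      by (simp add: path_mutants_def moran_update_def fitness_def)
  qed
qed

lemma drift_path_end_ge:
  "drift S (Path i0 k) \<ge> (if k \<in> PS then r * penalty_scale at_x0 * (centre_penalty at_centre - wc)
                          else penalty_scale at_x0 * centre_penalty at_centre)"
proof (cases "k \<in> PS")
  case True
  have "potential (insert Centre S) \<ge> raw_potential at_x0 True PS"
    using potential_ge_raw[OF track_insert(2)[OF S]] by (simp add: path_mutants_simps)
  then have "potential (insert Centre S) - potential S \<ge> penalty_scale at_x0 * (centre_penalty at_centre - wc)"
    using raw_potential_centre_diff(2)[of at_x0 PS at_centre] potential_eq by linarith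
  from mult_left_mono[OF this, of r] show ?thesis
    using True r_gt_1 by (simp add: vertex_drift_single_out path_mutants_def moran_update_def fitness_def mult.assoc)
next
  case False
  then show ?thesis using potential_remove_centre
    by (simp add: vertex_drift_single_out path_mutants_def moran_update_def fitness_def)
qed

lemma drift_centre_mutant_ge:
  assumes at_centre
  shows "drift S Centre \<ge> r * (raw_potential True True PS / (real l * real m) - F)"
proof -
  have "potential (insert x0 S) \<ge> raw_potential True True PS"
    using potential_ge_raw[OF track_insert(3)[OF S]] assms by (simp add: path_mutants_simps)
  moreover have "(\<Sum>w\<in>RR - {x0}. potential (insert w S)) \<ge> 0"
    by (intro sum_nonneg potential_bounds)
  ultimately have "(\<Sum>w\<in>RR. potential (moran_update S Centre w)) \<ge> raw_potential True True PS"
    using assms sum_reservoirs_split[of "\<lambda>w. potential (insert w S)"] by (simp add: moran_update_def)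
  then have "(\<Sum>w\<in>RR. potential (moran_update S Centre w)) / (real l * real m) - F
      \<ge> raw_potential True True PS / (real l * real m) - F"
    using l_ge_2 m_ge_2 by (simp add: divide_right_mono)
  from mult_left_mono[OF this, of r] show ?thesis
    using assms r_gt_1 potential_eq card_reservoirs unfolding vertex_drift_def by (simp add: fitness_def)
qed

lemma drift_centre_non_mutant_ge:
  assumes "\<not> at_centre"
  shows "drift S Centre \<ge> (raw_potential False False PS - F) / (real l * real m)"
proof -
  let ?sum = "\<Sum>w\<in>RR. potential (moran_update S Centre w)"
  have "w \<notin> S" if "w \<in> RR - {x0}" for w
    using that S unfolding track_def reservoirs_def by auto
  then have "(\<Sum>w\<in>RR - {x0}. potential (moran_update S Centre w)) = (\<Sum>w\<in>RR - {x0}. F)"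
    using assms potential_eq by (intro sum.cong) (auto simp: moran_update_def)
  also have "\<dots> = (real l * real m - 1) * F"
    using card_reservoirs x0_reservoir finite_reservoirs l_ge_2 m_ge_2 by (simp add: of_nat_diff)
  finally have others: "(\<Sum>w\<in>RR - {x0}. potential (moran_update S Centre w)) = (real l * real m - 1) * F" .
  have "potential (S - {x0}) \<ge> raw_potential False False PS"
    using potential_ge_raw[of "S - {x0}"] S assms by (simp add: path_mutants_simps subset_iff)
  then have "?sum \<ge> raw_potential False False PS + (real l * real m - 1) * F"
    using assms sum_reservoirs_split[of "\<lambda>w. potential (moran_update S Centre w)"] others
    by (simp add: moran_update_def)
  then have "?sum / (real l * real m) - F
      \<ge> (raw_potential False False PS + (real l * real m - 1) * F) / (real l * real m) - F"
    using l_ge_2 m_ge_2 by (simp add: divide_right_mono)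
  also have "(raw_potential False False PS + (real l * real m - 1) * F) / (real l * real m) - F
      = (raw_potential False False PS - F) / (real l * real m)"
    using l_ge_2 m_ge_2 by (simp add: field_simps)
  finally show ?thesis
    using assms potential_eq card_reservoirs unfolding vertex_drift_def by (simp add: fitness_def)
qed

lemma drift_inactive:
  assumes v: "v \<in> VV" and "v \<notin> Res i0 ` {1..m}" "v \<notin> Path i0 ` {1..k}" "v \<notin> (\<lambda>i. Path i k) ` {1..l}"
    and "v \<noteq> Centre"
  shows "drift S v = 0"
  using v
proof (cases rule: superstar_V_cases)
  case (reservoir i a)
  then have "i \<noteq> i0" using assms(2) by auto
  then have "v \<notin> S" "Path i 1 \<notin> S" using S reservoir unfolding track_def by auto
  then show ?thesis using reservoir by (intro vertex_drift_unchanged) (auto simp: moran_update_def)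
next
  case (path i j)
  then have "i \<noteq> i0" "j \<noteq> k" using assms(3,4) by auto
  then have "v \<notin> S" "Path i (j + 1) \<notin> S" "j < k" using S path unfolding track_def by auto
  then show ?thesis using path by (intro vertex_drift_unchanged) (auto simp: moran_update_def)
qed (use assms(5) in simp)

lemma sum_drift_decomp:
  "(\<Sum>v\<in>VV. drift S v) = (real m - 1) * (potential (S - {Path i0 1}) - potential S) + drift S x0
     + (real l - 1) * (potential (S - {Centre}) - potential S) + (\<Sum>j\<in>{1..<k}. drift S (Path i0 j))
     + drift S (Path i0 k) + drift S Centre"
proof -
  define reservoir where "reservoir = Res i0 ` ({1..m} - {a0})"
  define ends where "ends = (\<lambda>i. Path i k) ` ({1..l} - {i0})"
  define path where "path = Path i0 ` {1..<k}"
  define active where "active = insert x0 (insert (Path i0 k) (insert Centre (reservoir \<union> ends \<union> path)))"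
  have finite: "finite reservoir" "finite ends" "finite path"
    unfolding reservoir_def ends_def path_def by auto
  have disjoint: "reservoir \<inter> ends = {}" "(reservoir \<union> ends) \<inter> path = {}"
    "x0 \<notin> reservoir \<union> ends \<union> path" "Path i0 k \<notin> reservoir \<union> ends \<union> path"
    "Centre \<notin> reservoir \<union> ends \<union> path"
    unfolding reservoir_def ends_def path_def by auto
  have "active \<subseteq> VV"
    unfolding active_def reservoir_def ends_def path_def superstar_V_def reservoirs_def
    using i0 a0 k_pos by auto
  moreover have "drift S v = 0" if "v \<in> VV - active" for v
  proof (rule drift_inactive)
    show "v \<notin> Path i0 ` {1..k}" using that unfolding active_def path_def by (auto simp: less_le)
  qed (use that in \<open>auto simp: active_def reservoir_def ends_def\<close>)
  ultimately have "(\<Sum>v\<in>VV. drift S v) = (\<Sum>v\<in>active. drift S v)"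
    using finite_V by (intro sum.mono_neutral_right) auto
  also have "\<dots> = sum (drift S) reservoir + drift S x0 + sum (drift S) ends + sum (drift S) path
      + drift S (Path i0 k) + drift S Centre"
    unfolding active_def using finite disjoint by (simp add: sum.union_disjoint algebra_simps)
  also have "sum (drift S) reservoir = (real m - 1) * (potential (S - {Path i0 1}) - potential S)"
    unfolding reservoir_def using a0 m_ge_2
    by (subst sum.reindex) (auto simp: inj_on_def drift_reservoir of_nat_diff)
  also have "sum (drift S) ends = (real l - 1) * (potential (S - {Centre}) - potential S)"
    unfolding ends_def using i0 l_ge_2
    by (subst sum.reindex) (auto simp: inj_on_def drift_other_path_end of_nat_diff)
  also have "sum (drift S) path = (\<Sum>j\<in>{1..<k}. drift S (Path i0 j))"
    unfolding path_def by (subst sum.reindex) (auto simp: inj_on_def)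
  finally show ?thesis .
qed

lemma sum_drift_ge_lower_bound: "(\<Sum>v\<in>VV. drift S v) \<ge> drift_lower_bound at_x0 at_centre PS"
proof -
  have "(real m - 1) * (penalty_scale at_x0 * (path.H PS - path.H (PS - {1})))
      \<le> (real m - 1) * (potential (S - {Path i0 1}) - potential S)"
    using potential_remove_path_1 m_ge_2 by (intro mult_left_mono) auto
  moreover have "(real l - 1) * (penalty_scale at_x0 * centre_penalty at_centre)
      \<le> (real l - 1) * (potential (S - {Centre}) - potential S)"
    using potential_remove_centre l_ge_2 by (intro mult_left_mono) auto
  moreover have "penalty_scale at_x0 * (\<Sum>j\<in>{1..<k}. path.T PS j) \<le> (\<Sum>j\<in>{1..<k}. drift S (Path i0 j))"
    unfolding sum_distrib_left by (intro sum_mono drift_path_ge) simp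
  moreover have "(if at_x0 then - r * lam * (path.H (insert 1 PS) - path.H PS) else path.H PS - path.H (PS - {1}))
      \<le> drift S x0"
    using drift_x0_ge by simp
  ultimately show ?thesis
    unfolding sum_drift_decomp drift_lower_bound_def
    using drift_path_end_ge drift_centre_mutant_ge drift_centre_non_mutant_ge
    by (cases at_centre) (simp_all add: algebra_simps)
qed

end

lemma other_ends_centre_penalty: "(real l - 1) * wc = 2 * r"
  using wc_def l_ge_2 by simp

lemma sum_path_drift_nonneg:
  assumes "P \<subseteq> {1..k}"
  shows "(real m - 1) * (path.H P - path.H (P - {1})) + (\<Sum>j\<in>{1..<k}. path.T P j) \<ge> 0"
  using path.sum_path_drift_ge[OF assms] C_pos by (simp split: if_splits)

lemma drift_lower_bound_x0_centre:
  assumes P: "P \<subseteq> {1..k}" and pos: "raw_potential True True P > 0"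
  shows "drift_lower_bound True True P > 0"
proof -
  let ?F = "raw_potential True True P"
  have x0: "r * lam * (path.H (insert 1 P) - path.H P) \<le> r * lam * D"
    using path.path_penalty_insert_1_le r_gt_1 lam_bounds by (intro mult_left_mono) auto
  have "?F \<le> p"
    using centre_penalty_nonneg[of True] path.path_penalty_nonneg[OF P] lam_bounds
    by (simp add: raw_potential_def)
  moreover have "0 \<le> ?F / (real l * real m)" using pos by simp
  ultimately have centre: "r * (- p) \<le> r * (?F / (real l * real m) - ?F)"
    using r_gt_1 by (intro mult_left_mono) auto
  have path: "lam * ((real m - 1) * (path.H P - path.H (P - {1})) + (\<Sum>j\<in>{1..<k}. path.T P j)) \<ge> 0"
    using sum_path_drift_nonneg[OF P] lam_bounds by simp
  have ends: "(real l - 1) * (lam * wc) = 2 * r * lam"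
    using other_ends_centre_penalty by (simp add: algebra_simps)
  have "2 * r * lam - r * lam * D - r * p > 0"
    using r_gt_1 p_pos D_le_1 by (simp add: lam_def algebra_simps)
  then show ?thesis
    using x0 centre path ends mult_pos_pos[OF lam_bounds(1) wc_pos]
    unfolding drift_lower_bound_def penalty_scale_def centre_penalty_def
    by (cases "k \<in> P") (simp_all add: algebra_simps)
qed

lemma drift_lower_bound_x0:
  assumes P: "P \<subseteq> {1..k}" and pos: "raw_potential True False P > 0"
  shows "drift_lower_bound True False P > 0"
proof -
  let ?Q = "(real m - 1) * (path.H P - path.H (P - {1})) + (\<Sum>j\<in>{1..<k}. path.T P j)"
  have x0: "r * lam * (path.H (insert 1 P) - path.H P) \<le> r * lam * D"
    using path.path_penalty_insert_1_le r_gt_1 lam_bounds by (intro mult_left_mono) auto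
  have path: "lam * ?Q \<ge> (if k \<in> P then r * lam * wc else 0)"
  proof (cases "k \<in> P")
    case True
    then have "P \<noteq> {}" by auto
    then have "?Q \<ge> 2 * r * wc" using path.sum_path_drift_ge[OF P] C_def by simp
    then have "lam * ?Q \<ge> lam * (2 * r * wc)" using lam_bounds by (intro mult_left_mono) auto
    moreover have "r * lam * wc \<ge> 0" using r_gt_1 lam_bounds wc_pos by simp
    ultimately show ?thesis using True by (simp add: algebra_simps)
  qed (use sum_path_drift_nonneg[OF P] lam_bounds in simp)
  have "lam * path.H P < p"
    using pos by (simp add: raw_potential_def centre_penalty_def)
  then have "path.H P < 1/2" using lam_def p_pos by (simp add: field_simps)
  moreover have "lam * path.H P \<ge> 0" using lam_bounds path.path_penalty_nonneg[OF P] by simp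
  ultimately have "raw_potential False False P - raw_potential True False P \<ge> 1/4"
    using p_le by (simp add: raw_potential_def centre_penalty_def)
  then have centre: "(1/4) / (real l * real m)
      \<le> (raw_potential False False P - raw_potential True False P) / (real l * real m)"
    using l_ge_2 m_ge_2 by (intro divide_right_mono) auto
  have "r * lam * D * (real l * real m) < 1/4"
    using p_small by (simp add: lam_def algebra_simps)
  then have "r * lam * D < (1/4) / (real l * real m)"
    using l_ge_2 m_ge_2 by (simp add: field_simps)
  then show ?thesis
    using x0 path centre
    unfolding drift_lower_bound_def penalty_scale_def centre_penalty_def
    by (cases "k \<in> P") (simp_all add: algebra_simps)
qed

lemma drift_lower_bound_centre:
  assumes P: "P \<subseteq> {1..k}" and pos: "raw_potential False True P > 0"
  shows "drift_lower_bound False True P > 0"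
proof -
  let ?F = "raw_potential True True P" and ?h = "wc + path.H P"
  have h: "?h < 1" "?h \<ge> 0"
    using pos wc_pos path.path_penalty_nonneg[OF P] by (auto simp: raw_potential_def centre_penalty_def)
  have "lam * ?h \<le> 1/2 * 1" using lam_bounds h by (intro mult_mono) auto
  then have "?F \<ge> -1/2" using p_pos by (simp add: raw_potential_def centre_penalty_def)
  then have "?F / (real l * real m) \<ge> (-1/2) / (real l * real m)"
    using l_ge_2 m_ge_2 by (intro divide_right_mono) auto
  moreover have "(-1/2) / (real l * real m) \<ge> -1/2"
    using mult_mono[of 1 "real l" 1 "real m"] l_ge_2 m_ge_2 by (simp add: field_simps)
  moreover have "raw_potential False True P \<le> 1" using raw_potential_le_1[OF P] .
  ultimately have "r * (-3/2) \<le> r * (?F / (real l * real m) - raw_potential False True P)"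
    using r_gt_1 by (intro mult_left_mono) auto
  moreover have "path.H P - path.H (P - {1}) \<ge> 0"
    using path.path_penalty_remove_1 path.head_penalty_nonneg by simp
  ultimately show ?thesis
    using sum_path_drift_nonneg[OF P] other_ends_centre_penalty wc_pos r_gt_1
    unfolding drift_lower_bound_def penalty_scale_def centre_penalty_def
    by (cases "k \<in> P") (simp_all add: algebra_simps)
qed

lemma drift_lower_bound_path_only:
  assumes P: "P \<subseteq> {1..k}"
  shows "drift_lower_bound False False P \<ge> (if P = {} then 0 else r * wc)"
proof -
  have "path.H P - path.H (P - {1}) \<ge> 0"
    using path.path_penalty_remove_1 path.head_penalty_nonneg by simp
  moreover have "k \<in> P \<Longrightarrow> P \<noteq> {}" by auto
  moreover have "2 * (r * wc) \<le> C" "r * wc \<ge> 0" using C_def wc_pos r_gt_1 by simp_all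
  ultimately show ?thesis
    using path.sum_path_drift_ge[OF P]
    unfolding drift_lower_bound_def penalty_scale_def centre_penalty_def
    by (cases "k \<in> P"; cases "P = {}") (simp_all add: algebra_simps)
qed

lemma drift_lower_bound_pos:
  assumes P: "P \<subseteq> {1..k}" and pos: "raw_potential x c P > 0"
  shows "drift_lower_bound x c P \<ge> 0" and "x \<or> c \<or> P \<noteq> {} \<Longrightarrow> drift_lower_bound x c P > 0"
proof -
  have "r * wc > 0" using r_gt_1 wc_pos by simp
  then have "drift_lower_bound x c P > 0 \<or> (\<not> x \<and> \<not> c \<and> P = {} \<and> drift_lower_bound x c P \<ge> 0)"
    using pos drift_lower_bound_x0_centre[OF P] drift_lower_bound_x0[OF P]
      drift_lower_bound_centre[OF P] drift_lower_bound_path_only[OF P]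
    by (cases x; cases c; cases "P = {}") auto
  then show "drift_lower_bound x c P \<ge> 0" "x \<or> c \<or> P \<noteq> {} \<Longrightarrow> drift_lower_bound x c P > 0"
    by auto
qed

theorem superstar_extinction_prob_ge: "extinction_prob VV OUTS r x0 \<ge> p"
proof -
  have "potential {x0} \<le> extinction_prob VV OUTS r x0"
  proof (rule extinction_prob_ge_potential[OF x0_vertex potential_bounds])
    fix S assume "S \<subseteq> VV" "potential S > 0"
    then have track: "S \<subseteq> track" and pos: "raw_potential (x0 \<in> S) (Centre \<in> S) (path_mutants S) > 0"
      by (auto dest: potential_pos_imp)
    note bound = drift_lower_bound_pos[OF path_mutants_subset[OF track] pos]
    show "0 \<le> (\<Sum>v\<in>VV. drift S v)"
      using bound(1) sum_drift_ge_lower_bound[OF track pos] by linarith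
    assume "S \<noteq> {}"
    then have "x0 \<in> S \<or> Centre \<in> S \<or> path_mutants S \<noteq> {}"
      using track unfolding track_def path_mutants_def by auto
    then show "0 < (\<Sum>v\<in>VV. drift S v)"
      using bound(2) sum_drift_ge_lower_bound[OF track pos] by linarith
  qed
  then show ?thesis using potential_singleton_x0 by simp
qed

end

lemma superstar_size_bounds:
  fixes r L \<kappa> :: real and k l m :: nat
  assumes r: "r > 1" and L: "L \<ge> 1" and \<kappa>: "\<kappa> = max (3 * real k) (70 * r ^ 4 * L)"
    and l: "real l \<ge> 70 * r ^ 4 * \<kappa> * L" and m: "real m \<ge> 6 * r ^ 2 * \<kappa>"
  shows "70 \<le> \<kappa>" "3 * real k \<le> \<kappa>" "70 * r ^ 3 * \<kappa> \<le> real l" "6 * \<kappa> \<le> real m"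
proof -
  have r4: "r ^ 3 \<le> r ^ 4" "1 \<le> r ^ 4" using r by (simp_all add: power_increasing one_le_power)
  have "70 * 1 * 1 \<le> 70 * r ^ 4 * L" using r4 L by (intro mult_mono) auto
  then show \<kappa>70: "70 \<le> \<kappa>" using \<kappa> by simp
  show "3 * real k \<le> \<kappa>" using \<kappa> by simp
  have "70 * r ^ 3 * \<kappa> * 1 \<le> 70 * r ^ 4 * \<kappa> * L"
    using r4 L \<kappa>70 r by (intro mult_mono) auto
  then show "70 * r ^ 3 * \<kappa> \<le> real l" using l by simp
  have "6 * 1 * \<kappa> \<le> 6 * r ^ 2 * \<kappa>"
    using r \<kappa>70 by (intro mult_right_mono mult_left_mono) (auto simp: one_le_power)
  then show "6 * \<kappa> \<le> real m" using m by simp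
qed

lemma superstar_conditions:
  fixes r \<kappa> :: real and k l m :: nat
  assumes r: "r > 1" and k: "k > 0" and \<kappa>k: "3 * real k \<le> \<kappa>" and \<kappa>70: "70 \<le> \<kappa>"
    and l: "70 * r ^ 3 * \<kappa> \<le> real l" and m: "6 * \<kappa> \<le> real m"
  shows "l \<ge> 2" "m \<ge> 2" "4 * r ^ 3 * real k \<le> (real l - 1) * (real m - 1)"
    "32 * real k * real l * real m < 7 * 70 * \<kappa> * ((real l - 1) * (real m - 1))"
proof -
  have r3: "r ^ 3 \<ge> 1" using r by (simp add: one_le_power)
  have "1 * 70 \<le> r ^ 3 * \<kappa>" using r3 \<kappa>70 r by (intro mult_mono) auto
  then show l2: "l \<ge> 2" using l by (simp add: mult.assoc)
  show m2: "m \<ge> 2" using m \<kappa>70 by simp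
  have "4 * r ^ 3 * real k = r ^ 3 * (4 * real k)" by simp
  also have "\<dots> \<le> r ^ 3 * (35 * \<kappa>)" using \<kappa>k r by (intro mult_left_mono) auto
  also have "\<dots> = 70 * r ^ 3 * \<kappa> / 2" by simp
  also have "\<dots> \<le> real l / 2" using l by (simp add: mult_ac)
  also have "\<dots> \<le> (real l - 1) * 1" using l2 by simp
  also have "\<dots> \<le> (real l - 1) * (real m - 1)" using l2 m2 by (intro mult_left_mono) auto
  finally show "4 * r ^ 3 * real k \<le> (real l - 1) * (real m - 1)" .
  have "real l * real m \<le> (2 * (real l - 1)) * (2 * (real m - 1))"
    using l2 m2 by (intro mult_mono) auto
  then have "32 * real k * (real l * real m) \<le> 32 * real k * (4 * ((real l - 1) * (real m - 1)))"
    by (intro mult_left_mono) (auto simp: algebra_simps)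
  also have "\<dots> < 490 * (3 * real k) * ((real l - 1) * (real m - 1))"
    using k l2 m2 by simp
  also have "\<dots> \<le> 490 * \<kappa> * ((real l - 1) * (real m - 1))"
    using \<kappa>k l2 m2 by (intro mult_right_mono mult_left_mono) auto
  finally show "32 * real k * real l * real m < 7 * 70 * \<kappa> * ((real l - 1) * (real m - 1))"
    by (simp add: mult.assoc)
qed

lemma superstar_extinction_prob_ge_kappa:
  fixes r \<kappa> :: real and k l m :: nat
  assumes r: "r > 1" and k: "k > 0" and \<kappa>k: "3 * real k \<le> \<kappa>" and \<kappa>70: "70 \<le> \<kappa>"
    and l: "70 * r ^ 3 * \<kappa> \<le> real l" and m: "6 * \<kappa> \<le> real m" and x0: "x0 \<in> reservoirs l m"
  shows "extinction_prob (superstar_V k l m) (superstar_out k l m) r x0 \<ge> 1 / (7 * 70 * r ^ 4 * \<kappa>)"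
proof -
  note cond = superstar_conditions[OF r k \<kappa>k \<kappa>70 l m]
  obtain i0 a0 where x0: "x0 = Res i0 a0" "i0 \<in> {1..l}" "a0 \<in> {1..m}"
    using x0 unfolding reservoirs_def by auto
  define p where "p = 1 / (7 * 70 * r ^ 4 * \<kappa>)"
  define wc where "wc = 2 * r / (real l - 1)"
  define C where "C = 2 * r * wc"
  define D where "D = r * C * real k / (real m - 1)"
  define Q where "Q = (real l - 1) * (real m - 1)"
  have Q: "Q > 0" unfolding Q_def using cond(1,2) by simp
  have D_eq: "D = 4 * r ^ 3 * real k / Q"
    unfolding D_def C_def wc_def Q_def using cond(1,2) by (simp add: field_simps power3_eq_cube)
  have "8 * p * r * D * real l * real m = 32 * real k * real l * real m / (7 * 70 * \<kappa> * Q)"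
    using r \<kappa>70 Q unfolding p_def D_eq by (simp add: field_simps power3_eq_cube power4_eq_xxxx)
  then have p_small: "8 * p * r * D * real l * real m < 1"
    using cond(4) Q \<kappa>70 unfolding Q_def by (simp add: pos_divide_less_eq)
  interpret superstar_potential k l m r p wc C "C / (real m - 1)" D "2 * p" i0 a0
  proof
    have "1 * 70 \<le> r ^ 4 * \<kappa>" using \<kappa>70 r by (intro mult_mono) (auto simp: one_le_power)
    then show "0 < p" "p \<le> 1/4" unfolding p_def by (auto simp: field_simps)
    show "D \<le> 1" unfolding D_eq Q_def using cond(3) Q[unfolded Q_def] by simp
  qed (use k cond(1,2) r x0 p_small wc_def C_def D_def in auto)
  show ?thesis using superstar_extinction_prob_ge x0(1) unfolding p_def by simp
qed

theorem lemma4p5: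
  fixes r :: real
  assumes "r > 1"
  shows "\<exists>n0::nat. \<forall>(k::nat) (l::nat) (m::nat) (n::nat) (\<kappa>::real) x0.
           k > 0 \<longrightarrow> l > 0 \<longrightarrow> m > 0 \<longrightarrow>
           n = l * (k + m) + 1 \<longrightarrow>
           \<kappa> = max (3 * real k) (70 * r ^ 4 * ln (real n)) \<longrightarrow>
           real l \<ge> 70 * r ^ 4 * \<kappa> * ln (real n) \<longrightarrow>
           real m \<ge> 6 * r ^ 2 * \<kappa> \<longrightarrow>
           n \<ge> n0 \<longrightarrow>
           x0 \<in> reservoirs l m \<longrightarrow>
           extinction_prob (superstar_V k l m) (superstar_out k l m) r x0
             \<ge> 1 / (7 * 70 * r ^ 4 * \<kappa>)"
proof (rule exI[of _ 3], intro allI impI)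
  fix k l m n :: nat and \<kappa> :: real and x0
  assume k: "k > 0" and "l > 0" "m > 0" "n = l * (k + m) + 1"
    and \<kappa>: "\<kappa> = max (3 * real k) (70 * r ^ 4 * ln (real n))"
    and l: "real l \<ge> 70 * r ^ 4 * \<kappa> * ln (real n)" and m: "real m \<ge> 6 * r ^ 2 * \<kappa>"
    and n: "n \<ge> 3" and x0: "x0 \<in> reservoirs l m"
  have "exp 1 \<le> real n" using exp_le n by linarith
  then have "ln (real n) \<ge> 1" using n by (subst ln_ge_iff) auto
  note size = superstar_size_bounds[OF assms this \<kappa> l m]
  show "extinction_prob (superstar_V k l m) (superstar_out k l m) r x0 \<ge> 1 / (7 * 70 * r ^ 4 * \<kappa>)"
    using superstar_extinction_prob_ge_kappa[OF assms k size(2,1,3,4) x0] .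
qed

end
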